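(* Let $M$ be a von Neumann algebra acting on a Hilbert space $H$, let $a \in [0,1]_M$ be strict in $M$, and let $p \in M$ be a projection. Write $a = \begin{bmatrix} a_{11} & a_{12} \\ a_{12}^* & a_{22}\end{bmatrix}$ with respect to $\{p, 1-p\}$, i.e. $a_{11} = pap$, $a_{12} = pa(1-p)$, $a_{22} = (1-p)a(1-p)$. Then $a_{11} \in [0,p]$ is strict in the von Neumann algebra $pMp$ and $a_{22} \in [0,1-p]$ is strict in the von Neumann algebra $(1-p)M(1-p)$.
   Context: For a von Neumann algebra $N$ with unit $1_N$, $[0,1]_N = \{x \in N : 0 \le x \le 1_N\}$, and $\mathcal{P}(N)$ is the set of projections of $N$. For $x \in [0,1]_N$ define $s(x) = \sup\{q \in \mathcal{P}(N) : q \le x\}$ and $n(x) = \sup\{q \in \mathcal{P}(N) : qx = 0\}$; $x$ is called strict in $N$ if $s(x) = 0$ and $n(x) = 0$. The algebras $pMp$ and $(1-p)M(1-p)$ are regarded as von Neumann algebras with units $p$ and $1-p$ respectively. *)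

theory Defs
  imports "HOL-Analysis.Analysis"
begin

class complex_vector = real_vector +
  fixes scaleC :: "complex \<Rightarrow> 'a \<Rightarrow> 'a"
  assumes scaleC_add_right: "scaleC c (x + y) = scaleC c x + scaleC c y"
    and scaleC_add_left: "scaleC (c + d) x = scaleC c x + scaleC d x"
    and scaleC_scaleC: "scaleC c (scaleC d x) = scaleC (c * d) x"
    and scaleC_one: "scaleC 1 x = x"
    and scaleR_scaleC: "scaleR r x = scaleC (complex_of_real r) x"

class complex_inner = complex_vector + real_normed_vector +
  fixes cinner :: "'a \<Rightarrow> 'a \<Rightarrow> complex"
  assumes cinner_commute: "cinner x y = cnj (cinner y x)"
    and cinner_add_left: "cinner (x + y) z = cinner x z + cinner y z"
    and cinner_scaleC_left: "cinner (scaleC c x) y = cnj c * cinner x y"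
    and cinner_self_real: "Im (cinner x x) = 0"
    and cinner_self_nonneg: "0 \<le> Re (cinner x x)"
    and cinner_self_eq_zero: "cinner x x = 0 \<longleftrightarrow> x = 0"
    and norm_eq_sqrt_cinner: "norm x = sqrt (Re (cinner x x))"

class chilbert_space = complex_inner + complete_space

definition bounded_clinear :: "('h::complex_inner \<Rightarrow> 'h) \<Rightarrow> bool" where
  "bounded_clinear T \<longleftrightarrow>
     (\<forall>x y. T (x + y) = T x + T y) \<and> (\<forall>c x. T (scaleC c x) = scaleC c (T x)) \<and>
     (\<exists>K. \<forall>x. norm (T x) \<le> norm x * K)"

definition adj :: "('h::complex_inner \<Rightarrow> 'h) \<Rightarrow> ('h \<Rightarrow> 'h)" where
  "adj T = (\<lambda>y. THE z. \<forall>x. cinner (T x) y = cinner x z)"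

definition op_pos :: "('h::complex_inner \<Rightarrow> 'h) \<Rightarrow> bool" where
  "op_pos T \<longleftrightarrow> (\<forall>x. Im (cinner x (T x)) = 0 \<and> 0 \<le> Re (cinner x (T x)))"

definition op_le :: "('h::complex_inner \<Rightarrow> 'h) \<Rightarrow> ('h \<Rightarrow> 'h) \<Rightarrow> bool" where
  "op_le S T \<longleftrightarrow> op_pos (\<lambda>x. T x - S x)"

definition commutant :: "('h::complex_inner \<Rightarrow> 'h) set \<Rightarrow> ('h \<Rightarrow> 'h) set" where
  "commutant S = {T. bounded_clinear T \<and> (\<forall>A\<in>S. T \<circ> A = A \<circ> T)}"

text \<open>Von Neumann algebra on H: a self-adjoint set of bounded operators equal to its
  double commutant (equivalently, by the bicommutant theorem, a unital
  weak-operator-closed *-subalgebra of B(H)).\<close>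
definition von_neumann_algebra :: "('h::chilbert_space \<Rightarrow> 'h) set \<Rightarrow> bool" where
  "von_neumann_algebra M \<longleftrightarrow>
     (\<forall>T\<in>M. bounded_clinear T) \<and> (\<forall>T\<in>M. adj T \<in> M) \<and> commutant (commutant M) = M"

definition op_interval :: "('h::complex_inner \<Rightarrow> 'h) set \<Rightarrow> ('h \<Rightarrow> 'h) \<Rightarrow> ('h \<Rightarrow> 'h) set" where
  "op_interval N e = {x\<in>N. op_le (\<lambda>_. 0) x \<and> op_le x e}"

definition projections :: "('h::complex_inner \<Rightarrow> 'h) set \<Rightarrow> ('h \<Rightarrow> 'h) set" where
  "projections N = {q\<in>N. q \<circ> q = q \<and> adj q = q}"

definition proj_sup :: "('h::complex_inner \<Rightarrow> 'h) set \<Rightarrow> ('h \<Rightarrow> 'h) set \<Rightarrow> ('h \<Rightarrow> 'h)" where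
  "proj_sup N Q = (THE s. s \<in> projections N \<and> (\<forall>q\<in>Q. op_le q s) \<and>
                          (\<forall>r\<in>projections N. (\<forall>q\<in>Q. op_le q r) \<longrightarrow> op_le s r))"

definition s_supp :: "('h::complex_inner \<Rightarrow> 'h) set \<Rightarrow> ('h \<Rightarrow> 'h) \<Rightarrow> ('h \<Rightarrow> 'h)" where
  "s_supp N x = proj_sup N {q\<in>projections N. op_le q x}"

definition n_supp :: "('h::complex_inner \<Rightarrow> 'h) set \<Rightarrow> ('h \<Rightarrow> 'h) \<Rightarrow> ('h \<Rightarrow> 'h)" where
  "n_supp N x = proj_sup N {q\<in>projections N. q \<circ> x = (\<lambda>_. 0)}"

definition strict_in :: "('h::complex_inner \<Rightarrow> 'h) set \<Rightarrow> ('h \<Rightarrow> 'h) \<Rightarrow> bool" where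
  "strict_in N x \<longleftrightarrow> s_supp N x = (\<lambda>_. 0) \<and> n_supp N x = (\<lambda>_. 0)"

text \<open>Corner algebra qMq (as a set of operators on H, unit q).\<close>
definition corner :: "('h \<Rightarrow> 'h) \<Rightarrow> ('h \<Rightarrow> 'h) set \<Rightarrow> ('h \<Rightarrow> 'h) set" where
  "corner q M = (\<lambda>x. q \<circ> x \<circ> q) ` M"

end

(* Strictness of a means that a has no nonzero fixed vector and no nonzero null vector:
   the orthogonal projections onto the fixed space and onto the kernel of a commute with
   the commutant of M, hence lie in M, and they are the largest projections below a,
   respectively annihilating a, i.e. they are s(a) and n(a).
   In the corner pMp, a projection q below pap satisfies <y, y> <= <y, a y> on its range,
   which lies in the range of p; since a <= 1 this forces a y = y, so q = 0.  Likewise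
   q pap = 0 gives <y, a y> = 0 on the range of q, so a y = 0 by positivity and q = 0.
   The same applies to the projection 1 - p. *)
theory Submission
  imports Defs
begin

lemma cinner_add_right: "cinner x (y + z) = cinner x y + cinner x z"
  by (metis cinner_commute cinner_add_left complex_cnj_add)

lemma cinner_scaleC_right: "cinner x (scaleC c y) = c * cinner x y"
  by (metis cinner_commute cinner_scaleC_left complex_cnj_cnj complex_cnj_mult)

lemma cinner_zero_left [simp]: "cinner 0 y = 0"
  using cinner_add_left[of 0 0 y] by simp

lemma cinner_zero_right [simp]: "cinner x 0 = 0"
  using cinner_add_right[of x 0 0] by simp

lemma scaleC_minus1_left: "scaleC (-1) x = - x"
  by (metis scaleR_scaleC scaleR_minus1_left of_real_1 of_real_minus)

lemma scaleC_zero_right [simp]: "scaleC c 0 = 0"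
  using scaleC_add_right[of c 0 0] by simp

lemma scaleC_diff_right: "scaleC c (x - y) = scaleC c x - scaleC c y"
  by (metis add_diff_cancel scaleC_add_right diff_add_cancel)

lemma cinner_diff_left: "cinner (x - y) z = cinner x z - cinner y z"
  by (metis add_diff_cancel cinner_add_left diff_add_cancel)

lemma cinner_diff_right: "cinner x (y - z) = cinner x y - cinner x z"
  by (metis add_diff_cancel cinner_add_right diff_add_cancel)

lemma cinner_scaleR_left: "cinner (scaleR r x) y = of_real r * cinner x y"
  by (simp add: scaleR_scaleC cinner_scaleC_left)

lemma cinner_scaleR_right: "cinner x (scaleR r y) = of_real r * cinner x y"
  by (simp add: scaleR_scaleC cinner_scaleC_right)

lemma cinner_self_eq_norm: "cinner x x = complex_of_real ((norm x)\<^sup>2)"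
  using cinner_self_real[of x] cinner_self_nonneg[of x] norm_eq_sqrt_cinner[of x]
  by (simp add: complex_eq_iff)

lemma power2_norm_eq_cinner: "(norm x)\<^sup>2 = Re (cinner x x)"
  by (simp add: cinner_self_eq_norm)

lemma cinner_ext:
  assumes "\<And>z. cinner z x = cinner z y"
  shows "x = y"
proof -
  have "cinner (x - y) (x - y) = 0" using assms by (simp add: cinner_diff_right)
  then show ?thesis by (simp add: cinner_self_eq_zero)
qed

lemma cinner_Cauchy_Schwarz: "cmod (cinner x y) \<le> norm x * norm y"
proof (cases "y = 0")
  case True then show ?thesis by simp
next
  case False
  define c where "c = cinner y x / cinner y y"
  have ny: "norm y > 0" using False by simp
  have "0 \<le> Re (cinner (x - scaleC c y) (x - scaleC c y))" by (rule cinner_self_nonneg)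
  also have "cinner (x - scaleC c y) (x - scaleC c y)
     = cinner x x - c * cinner x y - cnj c * cinner y x + cnj c * c * cinner y y"
    by (simp add: cinner_diff_left cinner_diff_right cinner_scaleC_left cinner_scaleC_right algebra_simps)
  also have "c * cinner y y = cinner y x"
    using False by (simp add: c_def cinner_self_eq_zero)
  then have "cnj c * c * cinner y y = cnj c * cinner y x" by (simp add: mult.assoc)
  also have "c * cinner x y = cinner y x * cnj (cinner y x) / of_real ((norm y)\<^sup>2)"
    by (simp add: c_def cinner_self_eq_norm cinner_commute[of x y])
  also have "cinner y x * cnj (cinner y x) = of_real ((cmod (cinner y x))\<^sup>2)"
    by (simp add: complex_norm_square[symmetric] del: of_real_power)
  finally have "0 \<le> (norm x)\<^sup>2 - (cmod (cinner y x))\<^sup>2 / (norm y)\<^sup>2"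
    by (simp add: cinner_self_eq_norm)
  then have "(cmod (cinner y x))\<^sup>2 \<le> (norm x * norm y)\<^sup>2"
    using ny by (simp add: field_simps power_mult_distrib)
  then have "cmod (cinner y x) \<le> norm x * norm y"
    by (rule power2_le_imp_le) simp
  then show ?thesis by (metis cinner_commute complex_mod_cnj)
qed

lemma parallelogram_law:
  fixes a b :: "'a::complex_inner"
  shows "(norm (a + b))\<^sup>2 + (norm (a - b))\<^sup>2 = 2 * (norm a)\<^sup>2 + 2 * (norm b)\<^sup>2"
proof -
  have "cinner (a + b) (a + b) + cinner (a - b) (a - b) = 2 * cinner a a + 2 * cinner b b"
    by (simp add: cinner_add_left cinner_add_right cinner_diff_left cinner_diff_right algebra_simps)
  then have "Re (cinner (a + b) (a + b)) + Re (cinner (a - b) (a - b))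
      = 2 * Re (cinner a a) + 2 * Re (cinner b b)"
    by (metis plus_complex.sel(1) Re_complex_of_real times_complex.sel(1) mult_2)
  then show ?thesis by (simp add: power2_norm_eq_cinner)
qed

lemma nonneg_quadratic_imp_linear_coeff_zero:
  fixes c d :: real
  assumes "\<And>t. 0 \<le> 2*t*c + t^2*d"
  shows "c = 0"
proof (rule ccontr)
  assume c: "c \<noteq> 0"
  have "0 \<le> 2*c + d" "0 \<le> -2*c + d" using assms[of 1] assms[of "-1"] by simp_all
  then have d: "d \<ge> 0" by linarith
  define t where "t = -c/(d+1)"
  have tt: "t * (d+1) = -c" using d by (simp add: t_def)
  have "0 \<le> (d+1)^2 * (2*t*c + t^2*d)" using assms[of t] d by simp
  also have "\<dots> = 2*c*(t*(d+1))*(d+1) + (t*(d+1))^2 * d"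
    by (simp add: algebra_simps power2_eq_square)
  also have "\<dots> = - (c^2 * (d+2))" unfolding tt by (simp add: algebra_simps power2_eq_square)
  finally show False using c d by (smt (verit) mult_pos_pos zero_less_power2)
qed

section \<open>Orthogonal projections onto closed subspaces\<close>

definition csubspace :: "'a::complex_vector set \<Rightarrow> bool" where
  "csubspace K \<longleftrightarrow> 0 \<in> K \<and> (\<forall>x\<in>K. \<forall>y\<in>K. x + y \<in> K) \<and> (\<forall>c. \<forall>x\<in>K. scaleC c x \<in> K)"

lemma csubspace_scaleR: "csubspace K \<Longrightarrow> x \<in> K \<Longrightarrow> scaleR r x \<in> K"
  by (simp add: csubspace_def scaleR_scaleC)

lemma minimizing_sequence_Cauchy:
  fixes K :: "'a::complex_inner set"
  assumes K: "csubspace K" and kK: "\<And>n. k n \<in> K"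
    and d_le: "\<And>y. y \<in> K \<Longrightarrow> d \<le> (norm (x - y))\<^sup>2"
    and k_close: "\<And>n. (norm (x - k n))\<^sup>2 < d + 1 / real (Suc n)"
  shows "Cauchy k"
proof -
  \<comment> \<open>The parallelogram law applied to x - k m and x - k n, whose midpoint lies in K.\<close>
  have bound: "(norm (k m - k n))\<^sup>2 \<le> 2 / real (Suc m) + 2 / real (Suc n)" for m n
  proof -
    let ?a = "x - k m" and ?b = "x - k n"
    define mid where "mid = scaleR (1/2) (k m + k n)"
    have "mid \<in> K" using K kK by (simp add: mid_def csubspace_scaleR csubspace_def)
    then have "d \<le> (norm (x - mid))\<^sup>2" by (rule d_le)
    moreover have "?a + ?b = scaleR 2 (x - mid)" by (simp add: mid_def algebra_simps scaleR_2)
    then have "(norm (?a + ?b))\<^sup>2 = 4 * (norm (x - mid))\<^sup>2" by (simp add: power2_eq_square)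
    moreover have "(norm (?a + ?b))\<^sup>2 + (norm (k n - k m))\<^sup>2 = 2 * (norm ?a)\<^sup>2 + 2 * (norm ?b)\<^sup>2"
      using parallelogram_law[of ?a ?b] by simp
    ultimately show ?thesis
      using k_close[of m] k_close[of n] by (simp add: norm_minus_commute)
  qed
  show ?thesis
  proof (rule CauchyI)
    fix e :: real assume e: "0 < e"
    obtain N :: nat where N: "4 / e\<^sup>2 < real N" using reals_Archimedean2 by blast
    then have N_pos: "real N > 0" using e by (smt (verit) divide_pos_pos zero_less_power)
    have "norm (k m - k n) < e" if "N \<le> m" "N \<le> n" for m n
    proof -
      have "2 / real (Suc m) \<le> 2 / real N" "2 / real (Suc n) \<le> 2 / real N"
        using that N_pos by (simp_all add: frac_le)
      moreover have "4 / real N < e\<^sup>2" using N e N_pos by (simp add: field_simps)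
      ultimately have "(norm (k m - k n))\<^sup>2 < e\<^sup>2" using bound[of m n] by simp
      then show ?thesis using e by (simp add: power_less_imp_less_base)
    qed
    then show "\<exists>M. \<forall>m\<ge>M. \<forall>n\<ge>M. norm (k m - k n) < e" by blast
  qed
qed

lemma best_approximation_exists:
  fixes K :: "'a::chilbert_space set"
  assumes K: "csubspace K" and closed: "closed K"
  shows "\<exists>u\<in>K. \<forall>y\<in>K. (norm (x - u))\<^sup>2 \<le> (norm (x - y))\<^sup>2"
proof -
  define d where "d = (INF y\<in>K. (norm (x - y))\<^sup>2)"
  have K_ne: "K \<noteq> {}" using K by (auto simp: csubspace_def)
  have bdd: "bdd_below ((\<lambda>y. (norm (x - y))\<^sup>2) ` K)" by (rule bdd_belowI[of _ 0]) auto
  have d_le: "d \<le> (norm (x - y))\<^sup>2" if "y \<in> K" for y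
    unfolding d_def using bdd that by (rule cINF_lower)
  have "\<exists>y\<in>K. (norm (x - y))\<^sup>2 < d + 1 / real (Suc n)" for n
    using cINF_less_iff[OF K_ne bdd, of "d + 1 / real (Suc n)"] K_ne by (simp add: d_def)
  then obtain k where kK: "\<And>n. k n \<in> K" and k_close: "\<And>n. (norm (x - k n))\<^sup>2 < d + 1 / real (Suc n)"
    by metis
  have "Cauchy k" by (rule minimizing_sequence_Cauchy[OF K kK d_le k_close])
  then obtain u where lim: "k \<longlonglongrightarrow> u" using Cauchy_convergent convergent_def by blast
  have "u \<in> K" using closed_sequentially[OF closed kK lim] .
  moreover have "(norm (x - u))\<^sup>2 \<le> d"
  proof (rule LIMSEQ_le)
    show "(\<lambda>n. (norm (x - k n))\<^sup>2) \<longlonglongrightarrow> (norm (x - u))\<^sup>2" by (intro tendsto_intros lim)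
    show "(\<lambda>n. d + 1 / real (Suc n)) \<longlonglongrightarrow> d"
      using tendsto_add[OF tendsto_const LIMSEQ_inverse_real_of_nat] by (simp add: inverse_eq_divide)
    show "\<exists>N. \<forall>n\<ge>N. (norm (x - k n))\<^sup>2 \<le> d + 1 / real (Suc n)" using k_close less_imp_le by blast
  qed
  ultimately show ?thesis using d_le order_trans by blast
qed

lemma best_approximation_orthogonal:
  fixes K :: "'a::complex_inner set"
  assumes K: "csubspace K" and uK: "u \<in> K" and kK: "k \<in> K"
    and best: "\<And>y. y \<in> K \<Longrightarrow> (norm (x - u))\<^sup>2 \<le> (norm (x - y))\<^sup>2"
  shows "cinner k (x - u) = 0"
proof -
  define w where "w = x - u"
  define c where "c = cinner k w"
  \<comment> \<open>Perturb u within K in the direction s c k; minimality makes the linear term vanish.\<close>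
  have "0 \<le> 2 * s * (- (cmod c)\<^sup>2) + s\<^sup>2 * ((cmod c)\<^sup>2 * (norm k)\<^sup>2)" for s :: real
  proof -
    define t where "t = complex_of_real s * c"
    have "u + scaleC t k \<in> K" using K uK kK by (simp add: csubspace_def)
    then have "(norm w)\<^sup>2 \<le> (norm (w - scaleC t k))\<^sup>2"
      using best[of "u + scaleC t k"] by (simp add: w_def algebra_simps)
    also have "\<dots> = Re (cinner (w - scaleC t k) (w - scaleC t k))" by (rule power2_norm_eq_cinner)
    also have "cinner (w - scaleC t k) (w - scaleC t k)
        = cinner w w - t * cinner w k - cnj t * cinner k w + cnj t * t * cinner k k"
      by (simp add: cinner_diff_left cinner_diff_right cinner_scaleC_left cinner_scaleC_right algebra_simps)
    also have "t * cinner w k = of_real s * (c * cnj c)" by (simp add: t_def c_def cinner_commute[of w k])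
    also have "cnj t * cinner k w = of_real s * (c * cnj c)" by (simp add: t_def c_def)
    also have "cnj t * t = of_real s * of_real s * (c * cnj c)" by (simp add: t_def)
    also have "c * cnj c = of_real ((cmod c)\<^sup>2)"
      by (simp add: complex_norm_square[symmetric] del: of_real_power)
    finally show ?thesis by (simp add: cinner_self_eq_norm power2_eq_square)
  qed
  then have "- (cmod c)\<^sup>2 = 0" by (rule nonneg_quadratic_imp_linear_coeff_zero)
  then show ?thesis by (simp add: c_def w_def)
qed

definition orth_proj :: "'a::complex_inner set \<Rightarrow> 'a \<Rightarrow> 'a" where
  "orth_proj K x = (SOME u. u \<in> K \<and> (\<forall>k\<in>K. cinner k (x - u) = 0))"

context
  fixes K :: "'a::chilbert_space set"
  assumes K: "csubspace K" and closed: "closed K"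
begin

lemma orth_proj_in_orthogonal: "orth_proj K x \<in> K \<and> (\<forall>k\<in>K. cinner k (x - orth_proj K x) = 0)"
proof -
  obtain u where "u \<in> K" "\<forall>y\<in>K. (norm (x - u))\<^sup>2 \<le> (norm (x - y))\<^sup>2"
    using best_approximation_exists[OF K closed] by blast
  then have "u \<in> K \<and> (\<forall>k\<in>K. cinner k (x - u) = 0)"
    using best_approximation_orthogonal[OF K] by blast
  then show ?thesis unfolding orth_proj_def by (rule someI)
qed

lemma orth_proj_in: "orth_proj K x \<in> K"
  using orth_proj_in_orthogonal by blast

lemma orth_proj_orthogonal: "k \<in> K \<Longrightarrow> cinner k (x - orth_proj K x) = 0"
  using orth_proj_in_orthogonal by blast

lemma orth_proj_unique:
  assumes uK: "u \<in> K" and orth: "\<And>k. k \<in> K \<Longrightarrow> cinner k (x - u) = 0"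
  shows "orth_proj K x = u"
proof -
  have diff: "orth_proj K x - u \<in> K"
    using K uK orth_proj_in scaleC_minus1_left[of u]
    by (metis csubspace_def diff_conv_add_uminus)
  have "cinner (orth_proj K x - u) ((x - u) - (x - orth_proj K x)) = 0"
    using orth[OF diff] orth_proj_orthogonal[OF diff] by (simp add: cinner_diff_right)
  then show ?thesis by (simp add: cinner_self_eq_zero)
qed

lemma orth_proj_id: "x \<in> K \<Longrightarrow> orth_proj K x = x"
  by (rule orth_proj_unique) simp_all

lemma orth_proj_idem: "orth_proj K (orth_proj K x) = orth_proj K x"
  by (rule orth_proj_id[OF orth_proj_in])

lemma orth_proj_self_adjoint: "cinner (orth_proj K x) y = cinner x (orth_proj K y)"
proof -
  have "cinner (orth_proj K x) y = cinner (orth_proj K x) (orth_proj K y)"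
    using orth_proj_orthogonal[OF orth_proj_in, of x y] by (simp add: cinner_diff_right)
  moreover have "cinner (orth_proj K y) x = cinner (orth_proj K y) (orth_proj K x)"
    using orth_proj_orthogonal[OF orth_proj_in, of y x] by (simp add: cinner_diff_right)
  ultimately show ?thesis by (metis cinner_commute)
qed

lemma bounded_clinear_orth_proj: "bounded_clinear (orth_proj K)"
  unfolding bounded_clinear_def
proof (intro conjI allI exI)
  fix x y c
  show "orth_proj K (x + y) = orth_proj K x + orth_proj K y"
  proof (rule orth_proj_unique)
    show "orth_proj K x + orth_proj K y \<in> K" using K orth_proj_in by (simp add: csubspace_def)
    fix k assume "k \<in> K"
    have "x + y - (orth_proj K x + orth_proj K y) = (x - orth_proj K x) + (y - orth_proj K y)"
      by (simp add: algebra_simps)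
    then show "cinner k (x + y - (orth_proj K x + orth_proj K y)) = 0"
      using orth_proj_orthogonal[OF \<open>k \<in> K\<close>] by (metis add.right_neutral cinner_add_right)
  qed
  show "orth_proj K (scaleC c x) = scaleC c (orth_proj K x)"
    using K orth_proj_in orth_proj_orthogonal
    by (intro orth_proj_unique) (simp_all add: csubspace_def cinner_scaleC_right
        flip: scaleC_diff_right)
  have "(norm (orth_proj K x))\<^sup>2 = Re (cinner x (orth_proj K x))"
    using orth_proj_self_adjoint[of x "orth_proj K x"] by (simp add: orth_proj_idem power2_norm_eq_cinner)
  also have "\<dots> \<le> norm x * norm (orth_proj K x)"
    using complex_Re_le_cmod cinner_Cauchy_Schwarz order_trans by blast
  finally show "norm (orth_proj K x) \<le> norm x * 1"
    by (cases "orth_proj K x = 0") (simp_all add: power2_eq_square)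
qed

end

section \<open>Linear operators and adjoints\<close>

definition clinear :: "('a::complex_vector \<Rightarrow> 'b::complex_vector) \<Rightarrow> bool" where
  "clinear T \<longleftrightarrow> (\<forall>x y. T (x + y) = T x + T y) \<and> (\<forall>c x. T (scaleC c x) = scaleC c (T x))"

lemma clinear_add: "clinear T \<Longrightarrow> T (x + y) = T x + T y"
  by (simp add: clinear_def)

lemma clinear_scaleC: "clinear T \<Longrightarrow> T (scaleC c x) = scaleC c (T x)"
  by (simp add: clinear_def)

lemma clinear_scaleR: "clinear T \<Longrightarrow> T (scaleR r x) = scaleR r (T x)"
  by (simp add: scaleR_scaleC clinear_scaleC)

lemma clinear_zero: "clinear T \<Longrightarrow> T 0 = 0"
  using clinear_add[of T 0 0] by simp

lemma clinear_diff: "clinear T \<Longrightarrow> T (x - y) = T x - T y"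
  by (metis add_diff_cancel clinear_add diff_add_cancel)

lemma clinear_fun_diff: "clinear S \<Longrightarrow> clinear T \<Longrightarrow> clinear (\<lambda>x. S x - T x)"
  by (simp add: clinear_def scaleC_diff_right)

lemma bounded_clinear_imp_clinear: "bounded_clinear T \<Longrightarrow> clinear T"
  by (simp add: bounded_clinear_def clinear_def)

lemma bounded_clinear_imp_bounded_linear: "bounded_clinear T \<Longrightarrow> bounded_linear T"
  unfolding bounded_clinear_def
  by (metis (no_types, opaque_lifting) bounded_linear_intro scaleR_scaleC)

lemma bounded_clinear_id: "bounded_clinear id"
  unfolding bounded_clinear_def by (auto intro: exI[of _ 1])

lemma bounded_clinear_nonneg_bound:
  assumes "bounded_clinear T"
  obtains K where "\<And>x. norm (T x) \<le> norm x * K" "K \<ge> 0"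
proof -
  obtain K where K: "\<And>x. norm (T x) \<le> norm x * K"
    using assms by (auto simp: bounded_clinear_def)
  have "norm (T x) \<le> norm x * max K 0" for x
    using K[of x] mult_left_mono[of K "max K 0" "norm x"] by simp
  then show ?thesis using that[of "max K 0"] by simp
qed

lemma bounded_clinear_compose:
  assumes S: "bounded_clinear S" and T: "bounded_clinear T"
  shows "bounded_clinear (S \<circ> T)"
proof -
  obtain K1 where K1: "\<And>x. norm (S x) \<le> norm x * K1" "K1 \<ge> 0"
    using bounded_clinear_nonneg_bound[OF S] by blast
  obtain K2 where K2: "\<And>x. norm (T x) \<le> norm x * K2"
    using T unfolding bounded_clinear_def by blast
  have "norm (S (T x)) \<le> norm x * (K2 * K1)" for x
    using K1(1)[of "T x"] mult_right_mono[OF K2[of x] K1(2)] by (simp add: mult.assoc)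
  then show ?thesis using S T by (auto simp: bounded_clinear_def)
qed

lemma bounded_clinear_diff:
  assumes S: "bounded_clinear S" and T: "bounded_clinear T"
  shows "bounded_clinear (\<lambda>x. S x - T x)"
proof -
  obtain K1 where K1: "\<And>x. norm (S x) \<le> norm x * K1" using S by (auto simp: bounded_clinear_def)
  obtain K2 where K2: "\<And>x. norm (T x) \<le> norm x * K2" using T by (auto simp: bounded_clinear_def)
  have "norm (S x - T x) \<le> norm x * (K1 + K2)" for x
    using norm_triangle_ineq4[of "S x" "T x"] K1[of x] K2[of x] by (simp add: distrib_left)
  then show ?thesis using S T by (auto simp: bounded_clinear_def scaleC_diff_right)
qed

lemma Riesz_representation:
  fixes f :: "'a::chilbert_space \<Rightarrow> complex"
  assumes f_add: "\<And>x y. f (x + y) = f x + f y" and f_scaleC: "\<And>c x. f (scaleC c x) = c * f x"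
    and f_bounded: "\<And>x. cmod (f x) \<le> norm x * B"
  shows "\<exists>z. \<forall>x. f x = cinner z x"
proof (cases "\<forall>x. f x = 0")
  case True then show ?thesis by (auto intro: exI[of _ 0])
next
  case False
  then obtain x0 where fx0: "f x0 \<noteq> 0" by blast
  have f_diff: "f (x - y) = f x - f y" for x y by (metis add_diff_cancel f_add diff_add_cancel)
  have f0: "f 0 = 0" using f_diff[of 0 0] by simp
  have "bounded_linear f"
    by (rule bounded_linear_intro[where K=B]) (auto simp: f_add f_scaleC scaleR_scaleC f_bounded scaleR_conv_of_real)
  then have closed: "closed {x. f x = 0}"
    by (intro closed_Collect_eq) (auto intro: linear_continuous_on)
  have sub: "csubspace {x. f x = 0}"
    by (auto simp: csubspace_def f0 f_add f_scaleC)
  \<comment> \<open>w is orthogonal to the kernel, and f w x - f x w lies in the kernel.\<close>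
  define w where "w = x0 - orth_proj {x. f x = 0} x0"
  have kernel_orth: "f k = 0 \<Longrightarrow> cinner k w = 0" for k
    using orth_proj_orthogonal[OF sub closed] by (simp add: w_def)
  have fw: "f w = f x0" using orth_proj_in[OF sub closed] by (simp add: w_def f_diff)
  then have ww: "cinner w w \<noteq> 0" using fx0 f0 by (auto simp: cinner_self_eq_zero)
  have ww_real: "cnj (cinner w w) = cinner w w" by (metis cinner_commute)
  show ?thesis
  proof (intro exI allI)
    fix x
    have "f (scaleC (f w) x - scaleC (f x) w) = 0" by (simp add: f_diff f_scaleC)
    then have "cinner (scaleC (f w) x - scaleC (f x) w) w = 0" by (rule kernel_orth)
    then have "cnj (f w) * cinner x w = cnj (f x) * cinner w w"
      by (simp add: cinner_diff_left cinner_scaleC_left)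
    then have "f w * cinner w x = f x * cinner w w"
      by (metis cinner_commute complex_cnj_cnj complex_cnj_mult ww_real)
    then show "f x = cinner (scaleC (cnj (f w) / cinner w w) w) x"
      using ww by (simp add: cinner_scaleC_left ww_real field_simps)
  qed
qed

lemma adjoint_exists:
  fixes T :: "'a::chilbert_space \<Rightarrow> 'a"
  assumes T: "bounded_clinear T"
  shows "\<exists>z. \<forall>x. cinner (T x) y = cinner x z"
proof -
  obtain B where B: "\<And>x. norm (T x) \<le> norm x * B" using T by (auto simp: bounded_clinear_def)
  have lin: "clinear T" using T by (rule bounded_clinear_imp_clinear)
  have "\<exists>z. \<forall>x. cinner y (T x) = cinner z x"
  proof (rule Riesz_representation[where B = "norm y * B"])
    fix x x' c
    show "cinner y (T (x + x')) = cinner y (T x) + cinner y (T x')"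
      using lin by (simp add: clinear_add cinner_add_right)
    show "cinner y (T (scaleC c x)) = c * cinner y (T x)"
      using lin by (simp add: clinear_scaleC cinner_scaleC_right)
    have "cmod (cinner y (T x)) \<le> norm y * norm (T x)" by (rule cinner_Cauchy_Schwarz)
    also have "\<dots> \<le> norm y * (norm x * B)" using B by (simp add: mult_left_mono)
    finally show "cmod (cinner y (T x)) \<le> norm x * (norm y * B)" by (simp add: algebra_simps)
  qed
  then show ?thesis by (metis cinner_commute)
qed

lemma adj_unique:
  assumes "\<And>x y. cinner (T x) y = cinner x (S y)"
  shows "adj T = S"
proof
  fix y
  show "adj T y = S y"
    unfolding adj_def
    by (rule the_equality) (use assms in \<open>auto intro: cinner_ext simp: cinner_commute[of _ "S y"]\<close>)
qed

lemma cinner_adj_right: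
  fixes T :: "'a::chilbert_space \<Rightarrow> 'a"
  assumes T: "bounded_clinear T"
  shows "cinner (T x) y = cinner x (adj T y)"
proof -
  obtain z where z: "\<forall>x. cinner (T x) y = cinner x z" using adjoint_exists[OF T] by blast
  have "adj T y = z"
    unfolding adj_def by (rule the_equality) (use z in \<open>auto intro: cinner_ext\<close>)
  then show ?thesis using z by simp
qed

lemma cinner_adj_left:
  fixes T :: "'a::chilbert_space \<Rightarrow> 'a"
  assumes "bounded_clinear T"
  shows "cinner y (T x) = cinner (adj T y) x"
  by (metis cinner_adj_right[OF assms] cinner_commute)

lemma bounded_clinear_adj:
  fixes T :: "'a::chilbert_space \<Rightarrow> 'a"
  assumes T: "bounded_clinear T"
  shows "bounded_clinear (adj T)"
proof -
  note adj = cinner_adj_right[OF T]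
  obtain B where B: "\<And>x. norm (T x) \<le> norm x * B" "B \<ge> 0"
    using bounded_clinear_nonneg_bound[OF T] by blast
  have "adj T (x + y) = adj T x + adj T y" for x y
    by (rule cinner_ext) (simp add: adj[symmetric] cinner_add_right)
  moreover have "adj T (scaleC c x) = scaleC c (adj T x)" for c x
    by (rule cinner_ext) (simp add: adj[symmetric] cinner_scaleC_right)
  moreover have "norm (adj T y) \<le> norm y * B" for y
  proof -
    let ?v = "adj T y"
    have "(norm ?v)\<^sup>2 = Re (cinner (T ?v) y)" by (simp add: adj power2_norm_eq_cinner)
    also have "\<dots> \<le> norm (T ?v) * norm y"
      using complex_Re_le_cmod cinner_Cauchy_Schwarz order_trans by blast
    also have "\<dots> \<le> norm ?v * B * norm y" using B by (simp add: mult_right_mono)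
    finally show ?thesis
      using B(2) by (cases "?v = 0") (simp_all add: power2_eq_square algebra_simps)
  qed
  ultimately show ?thesis by (auto simp: bounded_clinear_def)
qed

section \<open>Positive operators\<close>

lemma real_form_imp_hermitian:
  assumes D: "clinear D" and real: "\<And>x. Im (cinner x (D x)) = 0"
  shows "cinner x (D y) = cinner (D x) y"
proof -
  \<comment> \<open>Polarization: expand the real forms at x + y and x + i y.\<close>
  have "cinner (x + y) (D (x + y)) = cinner x (D x) + cinner x (D y) + cinner y (D x) + cinner y (D y)"
    using D by (simp add: clinear_add cinner_add_left cinner_add_right)
  then have "Im (cinner x (D y)) + Im (cinner y (D x)) = 0"
    using real[of "x + y"] real[of x] real[of y] by simp
  moreover have "cinner (x + scaleC \<i> y) (D (x + scaleC \<i> y)) =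
      cinner x (D x) + \<i> * cinner x (D y) - \<i> * cinner y (D x) + cinner y (D y)"
    using D by (simp add: clinear_add clinear_scaleC cinner_add_left cinner_add_right
        cinner_scaleC_left cinner_scaleC_right algebra_simps)
  then have "Re (cinner x (D y)) - Re (cinner y (D x)) = 0"
    using real[of "x + scaleC \<i> y"] real[of x] real[of y] by simp
  ultimately have "cinner x (D y) = cnj (cinner y (D x))" by (simp add: complex_eq_iff)
  then show ?thesis by (metis cinner_commute)
qed

lemma op_pos_hermitian: "clinear D \<Longrightarrow> op_pos D \<Longrightarrow> cinner x (D y) = cinner (D x) y"
  by (rule real_form_imp_hermitian) (auto simp: op_pos_def)

lemma op_pos_form_zero_imp_zero:
  assumes D: "clinear D" and pos: "op_pos D" and zero: "cinner x (D x) = 0"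
  shows "D x = 0"
proof -
  let ?y = "D x"
  \<comment> \<open>Positivity of the form at x + t D x, a real quadratic polynomial in t without constant term.\<close>
  have "0 \<le> 2*t*(norm ?y)\<^sup>2 + t\<^sup>2 * Re (cinner ?y (D ?y))" for t :: real
  proof -
    have "0 \<le> Re (cinner (x + scaleR t ?y) (D (x + scaleR t ?y)))"
      using pos by (simp add: op_pos_def)
    also have "cinner (x + scaleR t ?y) (D (x + scaleR t ?y)) =
        cinner x (D x) + of_real t * cinner x (D ?y) + of_real t * cinner ?y (D x)
        + of_real t * of_real t * cinner ?y (D ?y)"
      using D by (simp add: clinear_add clinear_scaleR cinner_add_left cinner_add_right
          cinner_scaleR_left cinner_scaleR_right algebra_simps)
    finally show ?thesis
      using zero op_pos_hermitian[OF D pos, of x ?y] by (simp add: cinner_self_eq_norm power2_eq_square)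
  qed
  then have "(norm ?y)\<^sup>2 = 0" by (rule nonneg_quadratic_imp_linear_coeff_zero)
  then show ?thesis by simp
qed

lemma op_le_antisym:
  assumes S: "clinear S" and T: "clinear T" and "op_le S T" "op_le T S"
  shows "S = T"
proof
  fix x
  have pos: "op_pos (\<lambda>x. T x - S x)" and "op_pos (\<lambda>x. S x - T x)"
    using assms(3,4) by (simp_all add: op_le_def)
  then have "cinner x (T x - S x) = 0"
    by (simp add: op_pos_def complex_eq_iff cinner_diff_right) (smt (verit))
  then have "T x - S x = 0" by (rule op_pos_form_zero_imp_zero[OF clinear_fun_diff[OF T S] pos])
  then show "S x = T x" by simp
qed

lemma op_le_id_fixed_point:
  assumes a: "clinear a" and a_le: "op_le a id" and ge: "Re (cinner y y) \<le> Re (cinner y (a y))"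
  shows "a y = y"
proof -
  have pos: "op_pos (\<lambda>z. z - a z)" using a_le by (simp add: op_le_def)
  then have "cinner y (y - a y) = 0"
    using ge by (simp add: op_pos_def complex_eq_iff cinner_diff_right) (smt (verit))
  moreover have "clinear (\<lambda>z. z - a z)" using a by (simp add: clinear_def scaleC_diff_right)
  ultimately have "y - a y = 0" using op_pos_form_zero_imp_zero pos by blast
  then show ?thesis by simp
qed

section \<open>Commutants and von Neumann algebras\<close>

lemma commutant_imp_bounded_clinear: "S \<in> commutant X \<Longrightarrow> bounded_clinear S"
  by (simp add: commutant_def)

lemma commutant_commute: "S \<in> commutant X \<Longrightarrow> A \<in> X \<Longrightarrow> S (A x) = A (S x)"
  by (auto simp: commutant_def fun_eq_iff)

lemma commutant_compose: "S \<in> commutant X \<Longrightarrow> T \<in> commutant X \<Longrightarrow> S \<circ> T \<in> commutant X"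
  by (simp add: commutant_def bounded_clinear_compose fun_eq_iff)

lemma commutant_id: "id \<in> commutant X"
  by (simp add: commutant_def bounded_clinear_id)

lemma commutant_diff:
  assumes "S \<in> commutant X" "T \<in> commutant X" and X: "\<And>A. A \<in> X \<Longrightarrow> clinear A"
  shows "(\<lambda>x. S x - T x) \<in> commutant X"
  using assms by (auto simp: commutant_def bounded_clinear_diff fun_eq_iff clinear_diff)

lemma adj_in_commutant:
  fixes X :: "('a::chilbert_space \<Rightarrow> 'a) set"
  assumes X_bounded: "\<And>A. A \<in> X \<Longrightarrow> bounded_clinear A" and X_adj: "\<And>A. A \<in> X \<Longrightarrow> adj A \<in> X"
    and S: "S \<in> commutant X"
  shows "adj S \<in> commutant X"
proof -
  have S_bounded: "bounded_clinear S" using S by (rule commutant_imp_bounded_clinear)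
  have "adj S (A x) = A (adj S x)" if A: "A \<in> X" for A x
  proof (rule cinner_ext)
    fix z
    have "cinner z (adj S (A x)) = cinner (adj A (S z)) x"
      by (simp add: cinner_adj_right[OF S_bounded, symmetric] cinner_adj_left[OF X_bounded[OF A]])
    also have "\<dots> = cinner z (A (adj S x))"
      by (simp add: commutant_commute[OF S X_adj[OF A], symmetric] cinner_adj_right[OF S_bounded]
          cinner_adj_left[OF X_bounded[OF A], symmetric])
    finally show "cinner z (adj S (A x)) = cinner z (A (adj S x))" .
  qed
  then show ?thesis using bounded_clinear_adj[OF S_bounded] by (simp add: commutant_def fun_eq_iff)
qed

context
  fixes M :: "('a::chilbert_space \<Rightarrow> 'a) set"
  assumes vN: "von_neumann_algebra M"
begin

lemma von_neumann_algebra_bounded: "T \<in> M \<Longrightarrow> bounded_clinear T"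
  using vN by (simp add: von_neumann_algebra_def)

lemma von_neumann_algebra_clinear: "T \<in> M \<Longrightarrow> clinear T"
  by (simp add: von_neumann_algebra_bounded bounded_clinear_imp_clinear)

lemma von_neumann_algebra_bicommutant: "commutant (commutant M) = M"
  using vN by (simp add: von_neumann_algebra_def)

lemma von_neumann_algebra_compose: "S \<in> M \<Longrightarrow> T \<in> M \<Longrightarrow> S \<circ> T \<in> M"
  by (metis von_neumann_algebra_bicommutant commutant_compose)

lemma von_neumann_algebra_id: "id \<in> M"
  by (metis von_neumann_algebra_bicommutant commutant_id)

lemma von_neumann_algebra_diff: "S \<in> M \<Longrightarrow> T \<in> M \<Longrightarrow> (\<lambda>x. S x - T x) \<in> M"
  by (metis von_neumann_algebra_bicommutant commutant_diff commutant_imp_bounded_clinear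
      bounded_clinear_imp_clinear)

lemma von_neumann_algebra_zero: "(\<lambda>_. 0) \<in> M"
  using von_neumann_algebra_diff[OF von_neumann_algebra_id von_neumann_algebra_id] by simp

lemma adj_in_commutant_von_neumann_algebra: "S \<in> commutant M \<Longrightarrow> adj S \<in> commutant M"
  using vN by (intro adj_in_commutant) (simp_all add: von_neumann_algebra_def)

end

definition is_projection :: "('a::complex_inner \<Rightarrow> 'a) \<Rightarrow> bool" where
  "is_projection e \<longleftrightarrow> bounded_clinear e \<and> e \<circ> e = e \<and> adj e = e"

lemma projections_imp_is_projection:
  "(\<And>T. T \<in> N \<Longrightarrow> bounded_clinear T) \<Longrightarrow> q \<in> projections N \<Longrightarrow> is_projection q"
  by (simp add: projections_def is_projection_def)

lemma von_neumann_algebra_projections: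
  "von_neumann_algebra M \<Longrightarrow> q \<in> projections M \<Longrightarrow> is_projection q"
  by (rule projections_imp_is_projection) (simp_all add: von_neumann_algebra_def)

context
  fixes e :: "'a::chilbert_space \<Rightarrow> 'a"
  assumes e: "is_projection e"
begin

lemma projection_clinear: "clinear e"
  using e by (simp add: is_projection_def bounded_clinear_imp_clinear)

lemma projection_idem: "e (e x) = e x"
  using e by (metis is_projection_def comp_apply)

lemma projection_self_adjoint: "cinner (e x) y = cinner x (e y)"
  using e by (metis is_projection_def cinner_adj_right)

lemma projection_cinner_self: "cinner x (e x) = of_real ((norm (e x))\<^sup>2)"
  by (metis projection_idem projection_self_adjoint cinner_self_eq_norm)

lemma projection_norm_le: "norm (e x) \<le> norm x"
proof -
  have "(norm (e x))\<^sup>2 = cmod (cinner x (e x))"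
    by (simp add: projection_cinner_self norm_power)
  also have "\<dots> \<le> norm x * norm (e x)" by (rule cinner_Cauchy_Schwarz)
  finally show ?thesis by (cases "e x = 0") (simp_all add: power2_eq_square)
qed

lemma projection_complement: "is_projection (\<lambda>x. x - e x)"
proof -
  have "bounded_clinear (\<lambda>x. x - e x)"
    using bounded_clinear_diff[OF bounded_clinear_id, of e] e by (simp add: is_projection_def)
  moreover have "adj (\<lambda>x. x - e x) = (\<lambda>x. x - e x)"
    by (rule adj_unique) (simp add: cinner_diff_left cinner_diff_right projection_self_adjoint)
  ultimately show ?thesis
    by (simp add: is_projection_def fun_eq_iff projection_idem clinear_diff[OF projection_clinear])
qed

lemma projection_le_op_pos:
  assumes a: "clinear a" and pos: "op_pos a" and fixes_range: "\<And>x. a (e x) = e x"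
  shows "op_le e a"
  unfolding op_le_def op_pos_def
proof
  fix x
  define v where "v = x - e x"
  \<comment> \<open>With x = e x + v, the cross terms vanish since a fixes the range of e and e v = 0.\<close>
  have "e v = 0" by (simp add: v_def clinear_diff[OF projection_clinear] projection_idem)
  then have "cinner (e x) (a v) = 0"
    by (simp add: op_pos_hermitian[OF a pos] fixes_range projection_self_adjoint)
  moreover have "a x - e x = a v" using a fixes_range by (simp add: v_def clinear_diff)
  ultimately have "cinner x (a x - e x) = cinner v (a v)"
    by (simp add: v_def cinner_diff_left)
  then show "Im (cinner x (a x - e x)) = 0 \<and> 0 \<le> Re (cinner x (a x - e x))"
    using pos by (simp add: op_pos_def)
qed

end

lemma projections_complement:
  "von_neumann_algebra M \<Longrightarrow> p \<in> projections M \<Longrightarrow> (\<lambda>x. x - p x) \<in> projections M"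
  using von_neumann_algebra_diff[OF _ von_neumann_algebra_id, of M p]
    projection_complement[OF von_neumann_algebra_projections]
  unfolding projections_def is_projection_def by auto

lemma projection_le:
  fixes q e :: "'a::chilbert_space \<Rightarrow> 'a"
  assumes q: "is_projection q" and e: "is_projection e" and range: "\<And>x. e (q x) = q x"
  shows "op_le q e"
proof -
  have "q (e x) = q x" for x
  proof (rule cinner_ext)
    fix z
    have "cinner z (q (e x)) = cinner (e (q z)) x"
      by (simp add: projection_self_adjoint[OF q] projection_self_adjoint[OF e])
    also have "\<dots> = cinner z (q x)" by (simp add: range projection_self_adjoint[OF q])
    finally show "cinner z (q (e x)) = cinner z (q x)" .
  qed
  then have "(norm (q x))\<^sup>2 \<le> (norm (e x))\<^sup>2" for x
    by (metis projection_norm_le[OF q] norm_ge_zero power_mono)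
  then show ?thesis
    by (simp add: op_le_def op_pos_def cinner_diff_right projection_cinner_self[OF q]
        projection_cinner_self[OF e])
qed

lemma proj_sup_eq_greatest:
  assumes N: "\<And>T. T \<in> N \<Longrightarrow> clinear T" and Q: "Q \<subseteq> projections N"
    and eQ: "e \<in> Q" and greatest: "\<And>q. q \<in> Q \<Longrightarrow> op_le q e"
  shows "proj_sup N Q = e"
  unfolding proj_sup_def
proof (rule the_equality)
  show "e \<in> projections N \<and> (\<forall>q\<in>Q. op_le q e) \<and>
      (\<forall>r\<in>projections N. (\<forall>q\<in>Q. op_le q r) \<longrightarrow> op_le e r)"
    using eQ Q greatest by auto
  fix s assume s: "s \<in> projections N \<and> (\<forall>q\<in>Q. op_le q s) \<and>
      (\<forall>r\<in>projections N. (\<forall>q\<in>Q. op_le q r) \<longrightarrow> op_le s r)"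
  have "e \<in> projections N" using eQ Q by auto
  then have "op_le s e" "op_le e s" "clinear s" "clinear e"
    using s eQ greatest N by (auto simp: projections_def)
  then show "s = e" using op_le_antisym by blast
qed

lemma csubspace_kernel: "clinear T \<Longrightarrow> csubspace {x. T x = 0}"
  by (simp add: csubspace_def clinear_zero clinear_add clinear_scaleC)

lemma closed_kernel: "bounded_clinear T \<Longrightarrow> closed {x. T x = 0}"
  by (intro closed_Collect_eq)
    (auto intro: linear_continuous_on bounded_clinear_imp_bounded_linear)

lemma is_projection_orth_proj:
  fixes K :: "'a::chilbert_space set"
  assumes "csubspace K" "closed K"
  shows "is_projection (orth_proj K)"
  using assms
  by (simp add: is_projection_def bounded_clinear_orth_proj orth_proj_idem fun_eq_iff
      adj_unique orth_proj_self_adjoint)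

lemma orth_proj_commute:
  fixes S :: "'a::chilbert_space \<Rightarrow> 'a"
  assumes K: "csubspace K" "closed K" and S: "bounded_clinear S"
    and S_inv: "\<And>x. x \<in> K \<Longrightarrow> S x \<in> K" and adj_inv: "\<And>x. x \<in> K \<Longrightarrow> adj S x \<in> K"
  shows "S (orth_proj K x) = orth_proj K (S x)"
proof (rule orth_proj_unique[OF K, symmetric])
  show "S (orth_proj K x) \<in> K" using S_inv orth_proj_in[OF K] by blast
  fix k assume "k \<in> K"
  have "cinner k (S x - S (orth_proj K x)) = cinner (adj S k) (x - orth_proj K x)"
    by (simp add: clinear_diff[OF bounded_clinear_imp_clinear[OF S], symmetric] cinner_adj_left[OF S])
  also have "\<dots> = 0" using orth_proj_orthogonal[OF K] adj_inv \<open>k \<in> K\<close> by blast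
  finally show "cinner k (S x - S (orth_proj K x)) = 0" .
qed

lemma kernel_projection_in_von_neumann_algebra:
  fixes M :: "('a::chilbert_space \<Rightarrow> 'a) set"
  assumes vN: "von_neumann_algebra M" and T: "T \<in> M"
  shows "orth_proj {x. T x = 0} \<in> projections M"
proof -
  let ?K = "{x. T x = 0}"
  have K: "csubspace ?K" "closed ?K"
    using T by (simp_all add: csubspace_kernel closed_kernel von_neumann_algebra_clinear[OF vN]
        von_neumann_algebra_bounded[OF vN])
  \<comment> \<open>Operators commuting with T leave its kernel invariant, and the commutant is closed under adjoints.\<close>
  have kernel_inv: "S x \<in> ?K" if "S \<in> commutant M" "x \<in> ?K" for S x
    using that T commutant_commute[of S M T x]
    by (simp add: clinear_zero bounded_clinear_imp_clinear commutant_imp_bounded_clinear)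
  have "orth_proj ?K \<circ> S = S \<circ> orth_proj ?K" if S: "S \<in> commutant M" for S
    using orth_proj_commute[OF K commutant_imp_bounded_clinear[OF S] kernel_inv[OF S]
        kernel_inv[OF adj_in_commutant_von_neumann_algebra[OF vN S]]]
    by (simp add: fun_eq_iff)
  then have "orth_proj ?K \<in> commutant (commutant M)"
    using K by (simp add: commutant_def[of "commutant M"] bounded_clinear_orth_proj)
  then show ?thesis
    using is_projection_orth_proj[OF K]
    by (simp add: von_neumann_algebra_bicommutant[OF vN] projections_def is_projection_def)
qed

section \<open>Supports of positive contractions\<close>

lemma projection_le_cinner:
  fixes q :: "'a::chilbert_space \<Rightarrow> 'a"
  assumes "is_projection q" "op_le q b"
  shows "Re (cinner (q x) (q x)) \<le> Re (cinner (q x) (b (q x)))"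
proof -
  have "Re (cinner (q x) (q (q x))) \<le> Re (cinner (q x) (b (q x)))"
    using assms(2) by (simp add: op_le_def op_pos_def cinner_diff_right)
  then show ?thesis by (simp add: projection_idem[OF assms(1)])
qed

lemma self_adjoint_compose_zero:
  assumes S: "\<And>x y. cinner x (S y) = cinner (S x) y" and T: "\<And>x y. cinner x (T y) = cinner (T x) y"
    and zero: "\<And>x. S (T x) = 0"
  shows "T (S x) = 0"
  by (rule cinner_ext) (simp add: S T zero)

lemma op_interval_idD:
  assumes "a \<in> op_interval M id"
  shows "a \<in> M" "op_pos a" "op_le a id"
  using assms by (simp_all add: op_interval_def op_le_def)

context
  fixes M :: "('a::chilbert_space \<Rightarrow> 'a) set" and a :: "'a \<Rightarrow> 'a"
  assumes vN: "von_neumann_algebra M" and a: "a \<in> op_interval M id"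
begin

lemma s_supp_zero_imp_no_fixed_vector:
  assumes s: "s_supp M a = (\<lambda>_. 0)" and y: "a y = y"
  shows "y = 0"
proof -
  note a_facts = op_interval_idD[OF a]
  have a_lin: "clinear a" by (rule von_neumann_algebra_clinear[OF vN a_facts(1)])
  have T: "(\<lambda>x. x - a x) \<in> M"
    using von_neumann_algebra_diff[OF vN von_neumann_algebra_id[OF vN] a_facts(1)] by simp
  define F where "F = {x. a x = x}"
  have F_kernel: "{x. x - a x = 0} = F" by (auto simp: F_def)
  define E where "E = orth_proj F"
  have K: "csubspace F" "closed F"
    using csubspace_kernel[OF von_neumann_algebra_clinear[OF vN T], unfolded F_kernel]
      closed_kernel[OF von_neumann_algebra_bounded[OF vN T], unfolded F_kernel] by simp_all
  have EM: "E \<in> projections M"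
    using kernel_projection_in_von_neumann_algebra[OF vN T, unfolded F_kernel] by (simp add: E_def)
  have E: "is_projection E" by (simp add: E_def is_projection_orth_proj[OF K])
  \<comment> \<open>E, the projection onto the fixed vectors of a, is the largest projection below a.\<close>
  have "s_supp M a = E"
    unfolding s_supp_def
  proof (rule proj_sup_eq_greatest)
    show "E \<in> {q \<in> projections M. op_le q a}"
      using EM orth_proj_in[OF K] projection_le_op_pos[OF E a_lin a_facts(2)] by (simp add: E_def F_def)
    fix q assume q: "q \<in> {q \<in> projections M. op_le q a}"
    then have q_proj: "is_projection q" by (simp add: von_neumann_algebra_projections[OF vN])
    have "q x \<in> F" for x
      using q op_le_id_fixed_point[OF a_lin a_facts(3) projection_le_cinner[OF q_proj, of a]]
      by (simp add: F_def)
    then show "op_le q E"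
      using projection_le[OF q_proj E] orth_proj_id[OF K] by (simp add: E_def)
  qed (auto simp: von_neumann_algebra_clinear[OF vN])
  then have "E y = 0" using s by (metis (mono_tags))
  moreover have "E y = y" using orth_proj_id[OF K] y by (simp add: E_def F_def)
  ultimately show ?thesis by simp
qed

lemma n_supp_zero_imp_injective:
  assumes n: "n_supp M a = (\<lambda>_. 0)" and y: "a y = 0"
  shows "y = 0"
proof -
  note a_facts = op_interval_idD[OF a]
  have a_lin: "clinear a" by (rule von_neumann_algebra_clinear[OF vN a_facts(1)])
  have a_herm: "cinner x (a z) = cinner (a x) z" for x z
    by (rule op_pos_hermitian[OF a_lin a_facts(2)])
  define F where "F = {x. a x = 0}"
  define E where "E = orth_proj F"
  have K: "csubspace F" "closed F"
    using csubspace_kernel[OF a_lin] closed_kernel[OF von_neumann_algebra_bounded[OF vN a_facts(1)]]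
    by (simp_all add: F_def)
  have E: "is_projection E" by (simp add: E_def is_projection_orth_proj[OF K])
  \<comment> \<open>E, the projection onto the kernel of a, is the largest projection annihilating a.\<close>
  have "n_supp M a = E"
    unfolding n_supp_def
  proof (rule proj_sup_eq_greatest)
    have "a (E x) = 0" for x using orth_proj_in[OF K] by (simp add: E_def F_def)
    then have "E (a x) = 0" for x
      by (rule self_adjoint_compose_zero[OF a_herm projection_self_adjoint[OF E, symmetric]])
    then show "E \<in> {q \<in> projections M. q \<circ> a = (\<lambda>_. 0)}"
      using kernel_projection_in_von_neumann_algebra[OF vN a_facts(1)]
      by (simp add: E_def F_def fun_eq_iff)
    fix q assume q: "q \<in> {q \<in> projections M. q \<circ> a = (\<lambda>_. 0)}"
    then have q_proj: "is_projection q" by (simp add: von_neumann_algebra_projections[OF vN])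
    have "q (a x) = 0" for x using q by (simp add: fun_eq_iff)
    then have "q x \<in> F" for x
      using self_adjoint_compose_zero[OF projection_self_adjoint[OF q_proj, symmetric] a_herm]
      by (simp add: F_def)
    then show "op_le q E"
      using projection_le[OF q_proj E] orth_proj_id[OF K] by (simp add: E_def)
  qed (auto simp: von_neumann_algebra_clinear[OF vN])
  then have "E y = 0" using n by (metis (mono_tags))
  moreover have "E y = y" using orth_proj_id[OF K] y by (simp add: E_def F_def)
  ultimately show ?thesis by simp
qed

end

section \<open>Compressions to corners\<close>

context
  fixes M :: "('a::chilbert_space \<Rightarrow> 'a) set" and p :: "'a \<Rightarrow> 'a"
  assumes vN: "von_neumann_algebra M" and p: "p \<in> projections M"
begin

lemma corner_unit_is_projection: "is_projection p"
  by (rule von_neumann_algebra_projections[OF vN p])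

lemma corner_subset: "corner p M \<subseteq> M"
  using p von_neumann_algebra_compose[OF vN] by (auto simp: corner_def projections_def)

lemma corner_bounded: "T \<in> corner p M \<Longrightarrow> bounded_clinear T"
  using corner_subset von_neumann_algebra_bounded[OF vN] by blast

lemma corner_absorbs_unit: "T \<in> corner p M \<Longrightarrow> p (T x) = T x \<and> T (p x) = T x"
  by (auto simp: corner_def projection_idem[OF corner_unit_is_projection])

lemma corner_projections:
  "q \<in> projections (corner p M) \<Longrightarrow> is_projection q \<and> p (q x) = q x \<and> q (p x) = q x"
  using corner_bounded corner_absorbs_unit by (auto intro: projections_imp_is_projection simp: projections_def)

lemma compression_in_op_interval:
  assumes a: "a \<in> op_interval M id"
  shows "p \<circ> a \<circ> p \<in> op_interval (corner p M) p"
proof -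
  note a_facts = op_interval_idD[OF a]
  have p_sa: "cinner (p x) y = cinner x (p y)" for x y
    by (rule projection_self_adjoint[OF corner_unit_is_projection])
  have "op_pos (p \<circ> a \<circ> p)"
    using a_facts(2) by (simp add: op_pos_def p_sa[symmetric])
  moreover have "op_pos (\<lambda>x. p x - p (a (p x)))"
  proof -
    have "p x - p (a (p x)) = p (p x - a (p x))" for x
      by (simp add: clinear_diff[OF projection_clinear[OF corner_unit_is_projection]]
          projection_idem[OF corner_unit_is_projection])
    then show ?thesis using a_facts(3) by (simp add: op_le_def op_pos_def p_sa[symmetric])
  qed
  ultimately show ?thesis using a_facts(1) by (auto simp: op_interval_def op_le_def corner_def)
qed

lemma proj_sup_corner_eq_zero:
  assumes Q: "Q \<subseteq> projections (corner p M)" "(\<lambda>_. 0) \<in> Q" and zero: "\<And>q. q \<in> Q \<Longrightarrow> q = (\<lambda>_. 0)"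
  shows "proj_sup (corner p M) Q = (\<lambda>_. 0)"
proof (rule proj_sup_eq_greatest[OF _ Q])
  show "\<And>T. T \<in> corner p M \<Longrightarrow> clinear T"
    using corner_bounded bounded_clinear_imp_clinear by blast
  show "q \<in> Q \<Longrightarrow> op_le q (\<lambda>_. 0)" for q
    using zero[of q] by (simp add: op_le_def op_pos_def)
qed

lemma zero_in_corner_projections: "(\<lambda>_. 0) \<in> projections (corner p M)"
proof -
  have "(\<lambda>_. 0) = p \<circ> (\<lambda>_. 0) \<circ> p"
    using clinear_zero[OF projection_clinear[OF corner_unit_is_projection]] by (simp add: fun_eq_iff)
  then have "(\<lambda>_. 0) \<in> corner p M"
    unfolding corner_def by (rule image_eqI[where x = "\<lambda>_. 0"]) (rule von_neumann_algebra_zero[OF vN])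
  moreover have "adj (\<lambda>_::'a. 0) = (\<lambda>_. 0)" by (rule adj_unique) simp
  ultimately show ?thesis by (simp add: projections_def comp_def)
qed

context
  fixes a :: "'a \<Rightarrow> 'a"
  assumes a: "a \<in> op_interval M id"
begin

lemma s_supp_compression:
  assumes no_fixed: "\<And>y. a y = y \<Longrightarrow> y = 0"
  shows "s_supp (corner p M) (p \<circ> a \<circ> p) = (\<lambda>_. 0)"
  unfolding s_supp_def
proof (rule proj_sup_corner_eq_zero)
  show "(\<lambda>_. 0) \<in> {q \<in> projections (corner p M). op_le q (p \<circ> a \<circ> p)}"
    using zero_in_corner_projections compression_in_op_interval[OF a]
    by (simp add: op_interval_def)
  fix q assume q: "q \<in> {q \<in> projections (corner p M). op_le q (p \<circ> a \<circ> p)}"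
  \<comment> \<open>On the range of q, contained in that of p, the form of p a p agrees with that of a.\<close>
  have "a (q x) = q x" for x
  proof (rule op_le_id_fixed_point)
    note a_facts = op_interval_idD[OF a]
    show "clinear a" "op_le a id"
      using a_facts von_neumann_algebra_clinear[OF vN] by simp_all
    have "cinner (q x) ((p \<circ> a \<circ> p) (q x)) = cinner (q x) (a (q x))"
      using corner_projections q
      by (simp add: projection_self_adjoint[OF corner_unit_is_projection, symmetric])
    then show "Re (cinner (q x) (q x)) \<le> Re (cinner (q x) (a (q x)))"
      using projection_le_cinner[of q "p \<circ> a \<circ> p" x] corner_projections q by simp
  qed
  then show "q = (\<lambda>_. 0)" using no_fixed by (simp add: fun_eq_iff)
qed auto

lemma n_supp_compression:
  assumes injective: "\<And>y. a y = 0 \<Longrightarrow> y = 0"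
  shows "n_supp (corner p M) (p \<circ> a \<circ> p) = (\<lambda>_. 0)"
  unfolding n_supp_def
proof (rule proj_sup_corner_eq_zero)
  show "(\<lambda>_. 0) \<in> {q \<in> projections (corner p M). q \<circ> (p \<circ> a \<circ> p) = (\<lambda>_. 0)}"
    using zero_in_corner_projections by (simp add: comp_def)
  fix q assume q: "q \<in> {q \<in> projections (corner p M). q \<circ> (p \<circ> a \<circ> p) = (\<lambda>_. 0)}"
  note a_facts = op_interval_idD[OF a]
  have "a (q x) = 0" for x
  proof (rule op_pos_form_zero_imp_zero[of a])
    show "clinear a" "op_pos a"
      using a_facts von_neumann_algebra_clinear[OF vN] by simp_all
    have q_proj: "is_projection q" and q_p: "p (q y) = q y" "q (p y) = q y" for y
      using q corner_projections by auto
    have "q (p (a (p (q x)))) = 0" using q by (simp add: fun_eq_iff)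
    then have "q (a (q x)) = 0" by (simp add: q_p)
    then show "cinner (q x) (a (q x)) = 0"
      by (simp add: projection_self_adjoint[OF q_proj])
  qed
  then show "q = (\<lambda>_. 0)" using injective by (simp add: fun_eq_iff)
qed auto

end

end

theorem lemma2p1:
  fixes M :: "('h::chilbert_space \<Rightarrow> 'h) set" and a p :: "'h \<Rightarrow> 'h"
  assumes "von_neumann_algebra M"
    and "a \<in> op_interval M id"
    and "strict_in M a"
    and "p \<in> projections M"
  shows "p \<circ> a \<circ> p \<in> op_interval (corner p M) p
       \<and> strict_in (corner p M) (p \<circ> a \<circ> p)
       \<and> (\<lambda>x. x - p x) \<circ> a \<circ> (\<lambda>x. x - p x) \<in> op_interval (corner (\<lambda>x. x - p x) M) (\<lambda>x. x - p x)
       \<and> strict_in (corner (\<lambda>x. x - p x) M) ((\<lambda>x. x - p x) \<circ> a \<circ> (\<lambda>x. x - p x))"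
proof -
  note vN = assms(1) and a = assms(2)
  have "s_supp M a = (\<lambda>_. 0)" "n_supp M a = (\<lambda>_. 0)"
    using assms(3) by (simp_all add: strict_in_def)
  note no_fixed = s_supp_zero_imp_no_fixed_vector[OF vN a this(1)]
    and injective = n_supp_zero_imp_injective[OF vN a this(2)]
  have corner_strict: "q \<circ> a \<circ> q \<in> op_interval (corner q M) q \<and> strict_in (corner q M) (q \<circ> a \<circ> q)"
    if "q \<in> projections M" for q
    using compression_in_op_interval[OF vN that a] s_supp_compression[OF vN that a no_fixed]
      n_supp_compression[OF vN that a injective]
    unfolding strict_in_def by blast
  show ?thesis
    using corner_strict[OF assms(4)] corner_strict[OF projections_complement[OF vN assms(4)]]
    by blast
qed

end
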